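(* Let $G=(V,E)$ be a simple undirected graph with $n=|V|$ vertices and $m=|E|$ edges, let $b$ be a real number, and let $$\mathcal{P}_1=\Big\{(x,y)\in\mathbb{R}^m_{+}\times[0,1]^n:\ 1-y_u-y_v\le x_{uv}\ \text{for all } \{u,v\}\in E,\ \ \textstyle\sum_{v\in V}y_v\le b\Big\}.$$ If $b\ge 1$, then for every edge $\{u,v\}\in E$ the inequality $1-y_u-y_v\le x_{uv}$ is facet-defining for $\mathcal{P}_1$.
   Context: $x$ is indexed by edges and $y$ by vertices of $G$; $\mathcal{P}_1$ is the linear relaxation of the MIP formulation of the 1-hop distance-based critical node detection problem. An inequality is facet-defining if it is valid for $\mathcal{P}_1$ and the face it induces has dimension $\dim\mathcal{P}_1-1$. *)

theory Defs
  imports "HOL-Analysis.Analysis"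
begin

text \<open>A simple undirected graph: vertices are the elements of the finite type 'v,
  edges are indexed by the finite type 'e, each edge being a 2-element vertex set,
  with distinct indices giving distinct edges.\<close>
definition simple_graph :: "('e::finite \<Rightarrow> 'v::finite set) \<Rightarrow> bool" where
  "simple_graph E \<longleftrightarrow> (\<forall>e. card (E e) = 2) \<and> inj E"

definition P1 :: "('e::finite \<Rightarrow> 'v::finite set) \<Rightarrow> real \<Rightarrow> ((real^'e) \<times> (real^'v)) set" where
  "P1 E b = {p. let x = fst p; y = snd p in
      (\<forall>e. 0 \<le> x $ e) \<and> (\<forall>v. 0 \<le> y $ v \<and> y $ v \<le> 1) \<and>
      (\<forall>e u v. E e = {u, v} \<longrightarrow> 1 - y $ u - y $ v \<le> x $ e) \<and>
      (\<Sum>v\<in>UNIV. y $ v) \<le> b}"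

definition facet_defining :: "('a::euclidean_space) set \<Rightarrow> ('a \<Rightarrow> real) \<Rightarrow> ('a \<Rightarrow> real) \<Rightarrow> bool" where
  "facet_defining P g h \<longleftrightarrow>
     (\<forall>p\<in>P. g p \<le> h p) \<and> aff_dim {p\<in>P. g p = h p} = aff_dim P - 1"

end

theory Submission
  imports Defs
begin

text \<open>With \<open>r = 1/(4n)\<close>, the point with \<open>x \<equiv> 2\<close> and \<open>y \<equiv> r\<close> lies in the interior
  of \<open>P\<^sub>1\<close>: every edge constraint is slack by at least one, and the \<open>y\<close>-coordinates of
  nearby points stay positive and sum to at most \<open>1 \<le> b\<close>. So \<open>P\<^sub>1\<close> is full-dimensional.
  Lowering \<open>x\<^sub>e\<close> to \<open>1 - 2r\<close> moves this point onto the hyperplane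
  \<open>1 - y\<^sub>u - y\<^sub>v = x\<^sub>e\<close> while all other constraints stay slack, so a relatively open
  piece of that hyperplane lies in \<open>P\<^sub>1\<close>, and the face has codimension one.\<close>

lemma aff_dim_eq_DIM_if_ball_subset:
  fixes S :: "'a::euclidean_space set"
  assumes "ball c r \<subseteq> S" and "0 < r"
  shows "aff_dim S = DIM('a)"
proof (rule antisym)
  show "aff_dim S \<le> DIM('a)" by (rule aff_dim_le_DIM)
  have "aff_dim (ball c r) = DIM('a)" using assms(2) by (simp add: aff_dim_open)
  then show "DIM('a) \<le> aff_dim S" using aff_dim_subset[OF assms(1)] by simp
qed

lemma aff_dim_hyperplane_section:
  fixes S :: "'a::euclidean_space set"
  assumes "a \<noteq> 0" and "a \<bullet> c = \<beta>" and "0 < r"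
    and "ball c r \<inter> {p. a \<bullet> p = \<beta>} \<subseteq> S"
  shows "aff_dim (S \<inter> {p. a \<bullet> p = \<beta>}) = int DIM('a) - 1"
proof (rule antisym)
  let ?H = "{p. a \<bullet> p = \<beta>}"
  have dim_H: "aff_dim ?H = int DIM('a) - 1"
    using aff_dim_hyperplane[OF assms(1)] DIM_positive[where 'a='a] by simp
  show "aff_dim (S \<inter> ?H) \<le> int DIM('a) - 1"
    using aff_dim_subset[of "S \<inter> ?H" ?H] dim_H by auto
  have "aff_dim (?H \<inter> ball c r) = aff_dim ?H"
    by (rule aff_dim_convex_Int_open) (use assms(2,3) convex_hyperplane in auto)
  moreover have "?H \<inter> ball c r \<subseteq> S \<inter> ?H" using assms(4) by blast
  ultimately show "int DIM('a) - 1 \<le> aff_dim (S \<inter> ?H)"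
    using aff_dim_subset dim_H by metis
qed

lemma facet_definingI:
  fixes P :: "'a::euclidean_space set"
  assumes valid: "\<forall>p\<in>P. g p \<le> h p"
    and full: "ball c r \<subseteq> P" "0 < r"
    and hyperplane: "{p. g p = h p} = {p. a \<bullet> p = \<beta>}" "a \<noteq> 0"
    and face: "g c' = h c'" "ball c' r' \<inter> {p. g p = h p} \<subseteq> P" "0 < r'"
  shows "facet_defining P g h"
proof -
  have "{p\<in>P. g p = h p} = P \<inter> {p. a \<bullet> p = \<beta>}" using hyperplane(1) by blast
  moreover have "aff_dim (P \<inter> {p. a \<bullet> p = \<beta>}) = int DIM('a) - 1"
    by (rule aff_dim_hyperplane_section) (use hyperplane face in auto)
  ultimately show ?thesis
    unfolding facet_defining_def
    using valid aff_dim_eq_DIM_if_ball_subset[OF full] by simp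
qed

lemma le_quarter_if_le_inverse_card:
  assumes "r \<le> 1 / (4 * real CARD('a::finite))"
  shows "r \<le> 1 / 4"
proof -
  have "1 \<le> real CARD('a)" by (simp add: Suc_le_eq card_gt_0_iff)
  then have "1 / (4 * real CARD('a)) \<le> 1 / 4" by (simp add: frac_le)
  with assms show ?thesis by linarith
qed

lemma small_near_center:
  fixes y :: "real^'v::finite"
  assumes "dist y (\<chi> _. r) < r" and "r \<le> 1 / (4 * real CARD('v))"
  shows "0 < y $ w" and "y $ w < 1 / 2" and "(\<Sum>w\<in>UNIV. y $ w) \<le> 1"
proof -
  have near: "\<bar>y $ w - r\<bar> < r" for w
    using le_less_trans[OF dist_vec_nth_le assms(1)] by (simp add: dist_real_def)
  then show "0 < y $ w" by (simp add: abs_less_iff)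
  show "y $ w < 1 / 2"
    using near[of w] le_quarter_if_le_inverse_card[OF assms(2)] by (simp add: abs_less_iff)
  show "(\<Sum>w\<in>UNIV. y $ w) \<le> 1"
  proof (rule sum_bounded_above_divide)
    fix w
    have "y $ w \<le> 2 * r" using near[of w] by (simp add: abs_less_iff)
    also have "\<dots> \<le> 1 / (2 * real CARD('v))" using assms(2) by (simp add: field_simps)
    also have "\<dots> \<le> 1 / real CARD('v)" by (simp add: frac_le)
    finally show "y $ w \<le> 1 / real CARD('v)" .
  qed auto
qed

lemma P1_memI:
  fixes E :: "'e::finite \<Rightarrow> 'v::finite set"
  assumes "b \<ge> 1" and "dist (snd p) (\<chi> _. r) < r" and "r \<le> 1 / (4 * real CARD('v))"
    and "\<forall>f. 0 \<le> fst p $ f"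
    and "\<forall>f w w'. E f = {w, w'} \<longrightarrow> 1 - snd p $ w - snd p $ w' \<le> fst p $ f"
  shows "p \<in> P1 E b"
proof -
  note y = small_near_center[OF assms(2,3)]
  have "0 \<le> snd p $ w \<and> snd p $ w \<le> 1" for w using y(1,2)[of w] by linarith
  then show ?thesis unfolding P1_def Let_def using y(3) assms(1,4,5) by auto
qed

lemma dist_fst_nth_less:
  fixes p q :: "(real^'e::finite) \<times> 'b::metric_space"
  assumes "dist p q < r"
  shows "\<bar>fst p $ f - fst q $ f\<bar> < r"
  using le_less_trans[OF dist_vec_nth_le le_less_trans[OF dist_fst_le assms]]
  by (simp add: dist_real_def)

lemma ball_subset_P1:
  fixes E :: "'e::finite \<Rightarrow> 'v::finite set"
  assumes "b \<ge> 1" and "r \<le> 1 / (4 * real CARD('v))"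
  shows "ball (\<chi> _. 2, \<chi> _. r) r \<subseteq> P1 E b"
proof
  fix p :: "(real^'e) \<times> (real^'v)"
  assume "p \<in> ball (\<chi> _. 2, \<chi> _. r) r"
  then have near: "dist p (\<chi> _. 2, \<chi> _. r) < r" by (simp add: dist_commute)
  then have near_y: "dist (snd p) (\<chi> _. r) < r"
    using le_less_trans[OF dist_snd_le] by fastforce
  note y = small_near_center[OF near_y assms(2)]
  have x_ge_1: "1 \<le> fst p $ f" for f
    using dist_fst_nth_less[OF near, of f] le_quarter_if_le_inverse_card[OF assms(2)]
    by (simp add: abs_less_iff)
  have slack: "1 - snd p $ w - snd p $ w' \<le> fst p $ f" for f w w'
    using x_ge_1[of f] y(1)[of w] y(1)[of w'] by linarith
  show "p \<in> P1 E b"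
  proof (rule P1_memI[OF assms(1) near_y assms(2)])
    show "\<forall>f. 0 \<le> fst p $ f" using x_ge_1 by (meson order.trans zero_le_one)
    show "\<forall>f w w'. E f = {w, w'} \<longrightarrow> 1 - snd p $ w - snd p $ w' \<le> fst p $ f"
      using slack by blast
  qed
qed

lemma ball_Int_face_subset_P1:
  fixes E :: "'e::finite \<Rightarrow> 'v::finite set"
  assumes "b \<ge> 1" and "r \<le> 1 / (4 * real CARD('v))" and "E e = {u, v}"
  shows "ball (\<chi> f. if f = e then 1 - 2 * r else 2, \<chi> _. r) r
           \<inter> {p. 1 - snd p $ u - snd p $ v = fst p $ e} \<subseteq> P1 E b"
proof
  fix p :: "(real^'e) \<times> (real^'v)"
  assume "p \<in> ball (\<chi> f. if f = e then 1 - 2 * r else 2, \<chi> _. r) r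
            \<inter> {p. 1 - snd p $ u - snd p $ v = fst p $ e}"
  then have near: "dist p (\<chi> f. if f = e then 1 - 2 * r else 2, \<chi> _. r) < r"
    and on_face: "1 - snd p $ u - snd p $ v = fst p $ e"
    by (simp_all add: dist_commute)
  then have near_y: "dist (snd p) (\<chi> _. r) < r"
    using le_less_trans[OF dist_snd_le] by fastforce
  note y = small_near_center[OF near_y assms(2)]
  have x_ge_1: "1 \<le> fst p $ f" if "f \<noteq> e" for f
    using dist_fst_nth_less[OF near, of f] le_quarter_if_le_inverse_card[OF assms(2)] that
    by (simp add: abs_less_iff)
  have x_e: "0 \<le> fst p $ e" using on_face y(2)[of u] y(2)[of v] by linarith
  show "p \<in> P1 E b"
  proof (rule P1_memI[OF assms(1) near_y assms(2)])
    show "\<forall>f. 0 \<le> fst p $ f" using x_ge_1 x_e by (metis order.trans zero_le_one)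
    show "\<forall>f w w'. E f = {w, w'} \<longrightarrow> 1 - snd p $ w - snd p $ w' \<le> fst p $ f"
    proof (intro allI impI)
      fix f w w' assume edge: "E f = {w, w'}"
      show "1 - snd p $ w - snd p $ w' \<le> fst p $ f"
      proof (cases "f = e")
        case True
        then have "{w, w'} = {u, v}" using edge assms(3) by simp
        then show ?thesis using True on_face by (auto simp: doubleton_eq_iff)
      next
        case False
        then show ?thesis using x_ge_1[OF False] y(1)[of w] y(1)[of w'] by linarith
      qed
    qed
  qed
qed

theorem proposition3:
  fixes E :: "'e::finite \<Rightarrow> 'v::finite set" and b :: real and e :: 'e and u v :: 'v
  assumes "simple_graph E" and "b \<ge> 1" and "E e = {u, v}"
  shows "facet_defining (P1 E b) (\<lambda>p. 1 - snd p $ u - snd p $ v) (\<lambda>p. fst p $ e)"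
proof -
  define r :: real where "r = 1 / (4 * real CARD('v))"
  define c :: "(real^'e) \<times> (real^'v)"
    where "c = (\<chi> f. if f = e then 1 - 2 * r else 2, \<chi> _. r)"
  define a :: "(real^'e) \<times> (real^'v)" where "a = (axis e 1, axis u 1 + axis v 1)"
  have valid: "\<forall>p\<in>P1 E b. 1 - snd p $ u - snd p $ v \<le> fst p $ e"
    using assms(3) unfolding P1_def Let_def by auto
  have "0 < r" unfolding r_def by (simp add: card_gt_0_iff)
  have full: "ball (\<chi> _. 2, \<chi> _. r) r \<subseteq> P1 E b"
    by (rule ball_subset_P1) (simp_all add: assms(2) r_def)
  have hyperplane: "{p. 1 - snd p $ u - snd p $ v = fst p $ e} = {p. a \<bullet> p = 1}"
    by (auto simp: a_def inner_axis' inner_add_left prod_eq_iff split_beta)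
  have "a \<noteq> 0" by (simp add: a_def axis_eq_0_iff zero_prod_def)
  have "1 - snd c $ u - snd c $ v = fst c $ e" by (simp add: c_def)
  moreover have "ball c r \<inter> {p. 1 - snd p $ u - snd p $ v = fst p $ e} \<subseteq> P1 E b"
    unfolding c_def by (rule ball_Int_face_subset_P1) (simp_all add: assms(2,3) r_def)
  ultimately show ?thesis
    using facet_definingI[OF valid full \<open>0 < r\<close> hyperplane \<open>a \<noteq> 0\<close>] \<open>0 < r\<close>
    by blast
qed

end
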